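(* Two quadruplets $(\Phi_1,\Phi_2,\Phi_3,\Phi_{123})$ and $(\Phi_{23},\Phi_{13},\Phi_{12},\Phi)$ of (generic) complex numbers can be regarded as the vertices of two reciprocal $(4,6)$ configurations (with the vertex correspondence described in the context) if and only if $$Q(\Phi_1,\Phi_2,\Phi_3,\Phi_{123})=Q(\Phi_{23},\Phi_{13},\Phi_{12},\Phi).$$
   Context: The plane is identified with $\mathbb{C}$; $Q(P_1,P_2,P_3,P_4)=\frac{(P_1-P_2)(P_3-P_4)}{(P_2-P_3)(P_4-P_1)}$ is the cross-ratio. A $(4,6)$ configuration consists of four points of the plane, each pair of which is joined by a circular arc (generalized circles, i.e. circles or lines, allowed), such that the circular extensions of all six arcs pass through one common point $\Phi_*$ (possibly $\infty$, in which case all arcs are straight segments). Equivalently, a $(4,6)$ configuration is the image under a Möbius transformation of four points joined pairwise by six straight segments. For the two quadruplets, the arcs correspond as follows: $\{\Phi_1,\Phi_2\}\leftrightarrow\{\Phi,\Phi_{12}\}$, $\{\Phi_2,\Phi_3\}\leftrightarrow\{\Phi,\Phi_{23}\}$, $\{\Phi_3,\Phi_1\}\leftrightarrow\{\Phi,\Phi_{13}\}$, $\{\Phi_1,\Phi_{123}\}\leftrightarrow\{\Phi_{13},\Phi_{12}\}$, $\{\Phi_2,\Phi_{123}\}\leftrightarrow\{\Phi_{12},\Phi_{23}\}$, $\{\Phi_3,\Phi_{123}\}\leftrightarrow\{\Phi_{23},\Phi_{13}\}$. Two $(4,6)$ configurations (with common points $\Phi_*$ and $\Phi_*'$) are reciprocally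 related if the six angles made by the arcs of one configuration equal those made by the corresponding arcs of the other; equivalently, if there are Möbius transformations sending $\Phi_*$ and $\Phi_*'$ to $\infty$ such that the resulting two four-point/six-segment figures, after a rotation of one of them, have all corresponding segments parallel, i.e. form reciprocal triangles $\Delta(\Phi_{23},\Phi_{13},\Phi_{12})$, $\Delta(\Phi_1,\Phi_2,\Phi_3)$ with interior points $\Phi$, $\Phi_{123}$ (edges $(\Phi_1,\Phi_2),(\Phi_2,\Phi_3),(\Phi_3,\Phi_1)$ parallel to $(\Phi,\Phi_{12}),(\Phi,\Phi_{23}),(\Phi,\Phi_{13})$, and $(\Phi_1,\Phi_{123}),(\Phi_2,\Phi_{123}),(\Phi_3,\Phi_{123})$ parallel to $(\Phi_{13},\Phi_{12}),(\Phi_{12},\Phi_{23}),(\Phi_{23},\Phi_{13})$). Usual reciprocal triangles are the special case where all arcs are straight. *)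

theory Defs
  imports "HOL-Analysis.Analysis"
begin

definition cross_ratio :: "complex \<Rightarrow> complex \<Rightarrow> complex \<Rightarrow> complex \<Rightarrow> complex" where
  "cross_ratio P1 P2 P3 P4 = ((P1 - P2) * (P3 - P4)) / ((P2 - P3) * (P4 - P1))"

definition moebius :: "complex \<Rightarrow> complex \<Rightarrow> complex \<Rightarrow> complex \<Rightarrow> complex \<Rightarrow> complex" where
  "moebius a b c d z = (a * z + b) / (c * z + d)"

definition moebius_nondeg :: "complex \<Rightarrow> complex \<Rightarrow> complex \<Rightarrow> complex \<Rightarrow> bool" where
  "moebius_nondeg a b c d \<longleftrightarrow> a * d - b * c \<noteq> 0"

definition parallel_seg :: "complex \<Rightarrow> complex \<Rightarrow> complex \<Rightarrow> complex \<Rightarrow> bool" where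
  "parallel_seg z1 z2 w1 w2 \<longleftrightarrow> Im ((z1 - z2) * cnj (w1 - w2)) = 0"

text \<open>The quadruplets (P1,P2,P3,P123) and (F23,F13,F12,F) are the vertices of two
  reciprocally related (4,6) configurations: there are Moebius transformations sending
  the common points of the two configurations to infinity (and the vertices to finite
  points), such that after a rotation of the first image figure all corresponding
  segments are parallel, with the arc correspondence
  {P1,P2}~{F,F12}, {P2,P3}~{F,F23}, {P3,P1}~{F,F13},
  {P1,P123}~{F13,F12}, {P2,P123}~{F12,F23}, {P3,P123}~{F23,F13}.\<close>
definition reciprocal_46 ::
  "complex \<Rightarrow> complex \<Rightarrow> complex \<Rightarrow> complex \<Rightarrow> complex \<Rightarrow> complex \<Rightarrow> complex \<Rightarrow> complex \<Rightarrow> bool" where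
  "reciprocal_46 P1 P2 P3 P123 F23 F13 F12 F \<longleftrightarrow>
     (\<exists>a b c d a' b' c' d' u.
        moebius_nondeg a b c d \<and> moebius_nondeg a' b' c' d' \<and> norm u = 1 \<and>
        (\<forall>z\<in>{P1, P2, P3, P123}. c * z + d \<noteq> 0) \<and>
        (\<forall>z\<in>{F23, F13, F12, F}. c' * z + d' \<noteq> 0) \<and>
        (let p = (\<lambda>z. u * moebius a b c d z); q = moebius a' b' c' d' in
           parallel_seg (p P1) (p P2) (q F) (q F12) \<and>
           parallel_seg (p P2) (p P3) (q F) (q F23) \<and>
           parallel_seg (p P3) (p P1) (q F) (q F13) \<and>
           parallel_seg (p P1) (p P123) (q F13) (q F12) \<and>
           parallel_seg (p P2) (p P123) (q F12) (q F23) \<and>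
           parallel_seg (p P3) (p P123) (q F23) (q F13)))"

end

theory Submission
  imports Defs
begin

text \<open>Moebius transformations preserve cross-ratios and map any quadruple onto any other one with
  the same cross-ratio, so everything reduces to straight figures: two triangles with interior
  points whose six corresponding segments are parallel. Then every segment of the second figure
  is a real multiple of the corresponding one of the first; wedging the closure relations of two
  triangles of the second figure with the position vectors of the first (relative to its fourth
  point) shows that the real factors entering the two cross-ratios are proportional, so the
  cross-ratios agree as soon as the first figure is not collinear, which a non-real cross-ratio
  guarantees. Conversely, Maxwell's construction gives a reciprocal figure for any four points no
  three of which are collinear, and every non-real cross-ratio is attained by such points.\<close>

definition wedge :: "complex \<Rightarrow> complex \<Rightarrow> real" where
  "wedge u v = Im (cnj u * v)"

lemma wedge_self [simp]: "wedge u u = 0"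
  by (simp add: wedge_def)

lemma wedge_zero [simp]: "wedge 0 v = 0" "wedge u 0 = 0"
  by (simp_all add: wedge_def)

lemma wedge_swap: "wedge v u = - wedge u v"
  by (simp add: wedge_def algebra_simps)

lemma wedge_add_right: "wedge u (v + w) = wedge u v + wedge u w"
  by (simp add: wedge_def algebra_simps)

lemma wedge_of_real_mult_right [simp]: "wedge u (of_real t * v) = t * wedge u v"
  by (simp add: wedge_def algebra_simps)

lemma wedge_eq_0_iff:
  assumes "u \<noteq> 0"
  shows "wedge u v = 0 \<longleftrightarrow> (\<exists>t. v = of_real t * u)"
proof
  assume "wedge u v = 0"
  then have "Im (v / u) = 0"
    by (simp add: wedge_def Im_divide algebra_simps)
  then have "v = of_real (Re (v / u)) * u"
    using assms by (metis complex_is_Real_iff nonzero_eq_divide_eq of_real_Re)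
  then show "\<exists>t. v = of_real t * u" ..
qed auto

lemma wedge_triangle_sum:
  "wedge (x2 - x1) (x3 - x1) = wedge (x1 - x4) (x2 - x4) + wedge (x2 - x4) (x3 - x4) + wedge (x3 - x4) (x1 - x4)"
  by (simp add: wedge_def algebra_simps)

lemma wedge_vector_identity:
  "of_real (wedge v2 v3) * v1 + of_real (wedge v3 v1) * v2 + of_real (wedge v1 v2) * v3 = 0"
  by (simp add: wedge_def complex_eq_iff algebra_simps)

lemma parallel_seg_iff_wedge: "parallel_seg z1 z2 w1 w2 \<longleftrightarrow> wedge (z1 - z2) (w1 - w2) = 0"
  by (auto simp: parallel_seg_def wedge_def algebra_simps)

lemma parallel_segI: "w1 - w2 = of_real t * (z1 - z2) \<Longrightarrow> parallel_seg z1 z2 w1 w2"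
  by (simp add: parallel_seg_iff_wedge)

lemma parallel_seg_iff_real_multiple:
  "z1 \<noteq> z2 \<Longrightarrow> parallel_seg z1 z2 w1 w2 \<longleftrightarrow> (\<exists>t. w1 - w2 = of_real t * (z1 - z2))"
  by (simp add: parallel_seg_iff_wedge wedge_eq_0_iff)

lemma moebius_eqI:
  assumes "c * z + d \<noteq> 0" and "a * z + b = w * (c * z + d)"
  shows "moebius a b c d z = w"
  using assms by (simp add: moebius_def)

lemma moebius_diff:
  assumes "c * z + d \<noteq> 0" and "c * w + d \<noteq> 0"
  shows "moebius a b c d z - moebius a b c d w = (a * d - b * c) * (z - w) / ((c * z + d) * (c * w + d))"
  using assms by (simp add: moebius_def field_simps)

lemma inj_on_moebius:
  assumes "moebius_nondeg a b c d"
  shows "inj_on (moebius a b c d) {z. c * z + d \<noteq> 0}"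
proof (rule inj_onI)
  fix z w
  assume "z \<in> {z. c * z + d \<noteq> 0}" "w \<in> {z. c * z + d \<noteq> 0}"
    and "moebius a b c d z = moebius a b c d w"
  then have "(a * d - b * c) * (z - w) / ((c * z + d) * (c * w + d)) = 0"
    by (simp flip: moebius_diff)
  with assms \<open>z \<in> _\<close> \<open>w \<in> _\<close> show "z = w"
    by (simp add: moebius_nondeg_def)
qed

lemma distinct_map_moebius:
  assumes "moebius_nondeg a b c d" and "\<forall>z\<in>set zs. c * z + d \<noteq> 0" and "distinct zs"
  shows "distinct (map (moebius a b c d) zs)"
  using assms inj_on_subset[OF inj_on_moebius[OF assms(1)]] by (auto simp: distinct_map)

lemma cross_ratio_moebius:
  assumes "moebius_nondeg a b c d" and "\<forall>z\<in>{z1, z2, z3, z4}. c * z + d \<noteq> 0"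
  shows "cross_ratio (moebius a b c d z1) (moebius a b c d z2) (moebius a b c d z3) (moebius a b c d z4)
    = cross_ratio z1 z2 z3 z4"
proof -
  define k where "k = (a * d - b * c)\<^sup>2 / ((c * z1 + d) * (c * z2 + d) * (c * z3 + d) * (c * z4 + d))"
  have "k \<noteq> 0"
    using assms by (simp add: k_def moebius_nondeg_def)
  have "(moebius a b c d z1 - moebius a b c d z2) * (moebius a b c d z3 - moebius a b c d z4)
      = k * ((z1 - z2) * (z3 - z4))"
   and "(moebius a b c d z2 - moebius a b c d z3) * (moebius a b c d z4 - moebius a b c d z1)
      = k * ((z2 - z3) * (z4 - z1))"
    using assms(2) by (simp_all add: moebius_diff k_def field_simps power2_eq_square)
  with \<open>k \<noteq> 0\<close> show ?thesis
    by (simp add: cross_ratio_def)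
qed

lemma mult_moebius: "u * moebius a b c d z = moebius (u * a) (u * b) c d z"
  by (simp add: moebius_def algebra_simps)

lemma moebius_nondeg_mult:
  "u \<noteq> 0 \<Longrightarrow> moebius_nondeg a b c d \<Longrightarrow> moebius_nondeg (u * a) (u * b) c d"
  by (simp add: moebius_nondeg_def algebra_simps flip: right_diff_distrib)

lemma moebius_exists_if_cross_ratio_eq:
  assumes dz: "distinct [z1, z2, z3, z4]" and dw: "distinct [w1, w2, w3, w4]"
    and cr: "cross_ratio z1 z2 z3 z4 = cross_ratio w1 w2 w3 w4"
  shows "\<exists>a b c d. moebius_nondeg a b c d \<and> (\<forall>z\<in>{z1, z2, z3, z4}. c * z + d \<noteq> 0) \<and>
    moebius a b c d z1 = w1 \<and> moebius a b c d z2 = w2 \<and>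
    moebius a b c d z3 = w3 \<and> moebius a b c d z4 = w4"
proof -
  define \<alpha> where "\<alpha> = (w2 - w3) * (z2 - z1)"
  define \<beta> where "\<beta> = (w2 - w1) * (z2 - z3)"
  define a b c d where "a = w1 * \<alpha> - w3 * \<beta>" and "b = w3 * \<beta> * z1 - w1 * \<alpha> * z3"
    and "c = \<alpha> - \<beta>" and "d = \<beta> * z1 - \<alpha> * z3"
  have num: "a * z + b = w1 * \<alpha> * (z - z3) - w3 * \<beta> * (z - z1)" for z
    by (simp add: a_def b_def algebra_simps)
  have den: "c * z + d = \<alpha> * (z - z3) - \<beta> * (z - z1)" for z
    by (simp add: c_def d_def algebra_simps)
  have "\<alpha> \<noteq> 0" "\<beta> \<noteq> 0"
    using dz dw by (auto simp: \<alpha>_def \<beta>_def)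
  have "a * d - b * c = \<alpha> * \<beta> * (w1 - w3) * (z1 - z3)"
    by (simp add: a_def b_def c_def d_def algebra_simps)
  then have "moebius_nondeg a b c d"
    using dz dw \<open>\<alpha> \<noteq> 0\<close> \<open>\<beta> \<noteq> 0\<close> by (simp add: moebius_nondeg_def)
  have den2: "c * z2 + d = (z2 - z1) * (z2 - z3) * (w1 - w3)"
    unfolding den \<alpha>_def \<beta>_def by algebra
  have key: "\<alpha> * (z4 - z3) * (w4 - w1) = \<beta> * (z4 - z1) * (w4 - w3)"
  proof -
    have "(z2 - z3) * (z4 - z1) \<noteq> 0" "(w2 - w3) * (w4 - w1) \<noteq> 0"
      using dz dw by auto
    with cr show ?thesis
      by (simp add: cross_ratio_def \<alpha>_def \<beta>_def field_simps)
  qed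
  have den4: "c * z4 + d \<noteq> 0"
  proof
    assume "c * z4 + d = 0"
    then have "\<beta> * (z4 - z1) = \<alpha> * (z4 - z3)"
      by (simp add: den)
    with key have "\<alpha> * (z4 - z3) * (w3 - w1) = 0"
      by algebra
    with dz dw \<open>\<alpha> \<noteq> 0\<close> show False
      by auto
  qed
  show ?thesis
  proof (intro exI conjI)
    show "moebius_nondeg a b c d" by fact
    show "\<forall>z\<in>{z1, z2, z3, z4}. c * z + d \<noteq> 0"
      using den2 den4 dz dw \<open>\<alpha> \<noteq> 0\<close> \<open>\<beta> \<noteq> 0\<close> by (auto simp: den)
    show "moebius a b c d z1 = w1" "moebius a b c d z3 = w3"
      using dz \<open>\<alpha> \<noteq> 0\<close> \<open>\<beta> \<noteq> 0\<close> by (auto intro!: moebius_eqI simp: num den)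
    have "a * z2 + b = w2 * (c * z2 + d)"
      unfolding num den2 \<alpha>_def \<beta>_def by algebra
    with den2 dz dw show "moebius a b c d z2 = w2"
      by (intro moebius_eqI) auto
    have "a * z4 + b = w4 * (c * z4 + d)"
      unfolding num den using key by algebra
    with den4 show "moebius a b c d z4 = w4"
      by (rule moebius_eqI)
  qed
qed

definition reciprocal_figures ::
  "complex \<Rightarrow> complex \<Rightarrow> complex \<Rightarrow> complex \<Rightarrow> complex \<Rightarrow> complex \<Rightarrow> complex \<Rightarrow> complex \<Rightarrow> bool" where
  "reciprocal_figures x1 x2 x3 x4 y23 y13 y12 y \<longleftrightarrow>
     parallel_seg x1 x2 y y12 \<and> parallel_seg x2 x3 y y23 \<and> parallel_seg x3 x1 y y13 \<and>
     parallel_seg x1 x4 y13 y12 \<and> parallel_seg x2 x4 y12 y23 \<and> parallel_seg x3 x4 y23 y13"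

lemma reciprocal_46_iff:
  "reciprocal_46 P1 P2 P3 P123 F23 F13 F12 F \<longleftrightarrow>
    (\<exists>a b c d a' b' c' d'. moebius_nondeg a b c d \<and> moebius_nondeg a' b' c' d' \<and>
       (\<forall>z\<in>{P1, P2, P3, P123}. c * z + d \<noteq> 0) \<and> (\<forall>z\<in>{F23, F13, F12, F}. c' * z + d' \<noteq> 0) \<and>
       reciprocal_figures
         (moebius a b c d P1) (moebius a b c d P2) (moebius a b c d P3) (moebius a b c d P123)
         (moebius a' b' c' d' F23) (moebius a' b' c' d' F13) (moebius a' b' c' d' F12) (moebius a' b' c' d' F))"
  (is "?rec \<longleftrightarrow> ?straight")
proof
  assume ?rec
  then show ?straight
    unfolding reciprocal_46_def reciprocal_figures_def Let_def mult_moebius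
    by (metis moebius_nondeg_mult norm_zero zero_neq_one)
next
  assume ?straight
  then show ?rec
    unfolding reciprocal_46_def reciprocal_figures_def Let_def by (metis mult_1 norm_one)
qed

lemma Im_cross_ratio_eq_0_if_collinear:
  assumes "x2 \<noteq> x4" and "wedge (x2 - x4) (x1 - x4) = 0" and "wedge (x2 - x4) (x3 - x4) = 0"
  shows "Im (cross_ratio x1 x2 x3 x4) = 0"
proof -
  define v where "v = x2 - x4"
  obtain s t where x1: "x1 = x4 + of_real s * v" and x3: "x3 = x4 + of_real t * v"
    using assms by (auto simp: wedge_eq_0_iff v_def algebra_simps)
  have x2: "x2 = x4 + v"
    by (simp add: v_def)
  have "cross_ratio x1 x2 x3 x4 = of_real ((s - 1) * t) * (v * v) / (of_real ((1 - t) * - s) * (v * v))"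
    unfolding cross_ratio_def x1 x2 x3 by (simp add: algebra_simps)
  also have "\<dots> = of_real ((s - 1) * t / ((1 - t) * - s))"
    using assms(1) by (simp add: v_def)
  finally show ?thesis
    by simp
qed

lemma reciprocal_figures_cross_ratio_eq:
  assumes dx: "distinct [x1, x2, x3, x4]" and dy: "distinct [y23, y13, y12, y]"
    and non_real: "Im (cross_ratio x1 x2 x3 x4) \<noteq> 0"
    and rec: "reciprocal_figures x1 x2 x3 x4 y23 y13 y12 y"
  shows "cross_ratio x1 x2 x3 x4 = cross_ratio y23 y13 y12 y"
proof -
  obtain a b c d f :: real where
    ea: "y - y12 = of_real a * (x1 - x2)" and eb: "y - y23 = of_real b * (x2 - x3)"
    and ec: "y - y13 = of_real c * (x3 - x1)" and ed: "y13 - y12 = of_real d * (x1 - x4)"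
    and ef: "y23 - y13 = of_real f * (x3 - x4)"
    using rec dx unfolding reciprocal_figures_def by (auto simp: parallel_seg_iff_real_multiple)
  have "b \<noteq> 0" "c \<noteq> 0" "d \<noteq> 0"
    using eb ec ed dy by auto
  define v1 v2 v3 where "v1 = x1 - x4" and "v2 = x2 - x4" and "v3 = x3 - x4"
  have v1_relation: "of_real (a + c - d) * v1 = of_real a * v2 + of_real c * v3"
    using ea ec ed unfolding v1_def v2_def v3_def of_real_add of_real_diff by algebra
  have v3_relation: "of_real (b + c - f) * v3 = of_real c * v1 + of_real b * v2"
    using eb ec ef unfolding v1_def v2_def v3_def of_real_add of_real_diff by algebra
  define p q r where "p = wedge v1 v2" and "q = wedge v2 v3" and "r = wedge v3 v1"
  have ap: "a * p = c * r"
    using arg_cong[OF v1_relation, of "wedge v1"]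
    by (simp add: wedge_add_right p_def r_def wedge_swap[of v1 v3] del: of_real_add of_real_diff)
  have bq: "b * q = c * r"
    using arg_cong[OF v3_relation, of "wedge v3"]
    by (simp add: wedge_add_right q_def r_def wedge_swap[of v3 v2] del: of_real_add of_real_diff)
  have dp: "(a + c - d) * p = - c * q"
    using arg_cong[OF v1_relation, of "wedge v2"]
    by (simp add: wedge_add_right p_def q_def wedge_swap[of v2 v1] del: of_real_add of_real_diff)
  have fq: "(b + c - f) * q = - c * p"
    using arg_cong[OF v3_relation, of "wedge v2"]
    by (simp add: wedge_add_right p_def q_def wedge_swap[of v2 v1] del: of_real_add of_real_diff)
  have "p \<noteq> 0" "q \<noteq> 0"
  proof -
    have "p = 0 \<longleftrightarrow> q = 0"
      using dp fq \<open>c \<noteq> 0\<close> by auto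
    moreover have "\<not> (p = 0 \<and> q = 0)"
      using Im_cross_ratio_eq_0_if_collinear[of x2 x4 x1 x3] dx non_real
      by (auto simp: p_def q_def v1_def v2_def v3_def wedge_swap[of "x1 - x4"])
    ultimately show "p \<noteq> 0" "q \<noteq> 0"
      by auto
  qed
  \<comment> \<open>by \<open>dp\<close> and \<open>fq\<close> the left-hand side is \<open>c (p + q) (a p - b q)\<close>\<close>
  have "(a * f - b * d) * (p * q) = 0"
    using ap bq dp fq by algebra
  with \<open>p \<noteq> 0\<close> \<open>q \<noteq> 0\<close> have afbd: "a * f = b * d"
    by simp
  have "(y23 - y13) * (y12 - y) = - of_real (b * d) * ((x1 - x2) * (x3 - x4))"
    using ea ef unfolding of_real_mult afbd [symmetric] by algebra
  moreover have "(y13 - y12) * (y - y23) = - of_real (b * d) * ((x2 - x3) * (x4 - x1))"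
    using eb ed unfolding of_real_mult by algebra
  ultimately show ?thesis
    using \<open>b \<noteq> 0\<close> \<open>d \<noteq> 0\<close> by (simp add: cross_ratio_def)
qed

definition general_position :: "complex \<Rightarrow> complex \<Rightarrow> complex \<Rightarrow> complex \<Rightarrow> bool" where
  "general_position x1 x2 x3 x4 \<longleftrightarrow>
     wedge (x1 - x4) (x2 - x4) \<noteq> 0 \<and> wedge (x2 - x4) (x3 - x4) \<noteq> 0 \<and>
     wedge (x3 - x4) (x1 - x4) \<noteq> 0 \<and> wedge (x2 - x1) (x3 - x1) \<noteq> 0"

lemma general_position_imp_distinct:
  "general_position x1 x2 x3 x4 \<Longrightarrow> distinct [x1, x2, x3, x4]"
  by (auto simp: general_position_def)

lemma reciprocal_figure_exists:
  assumes "general_position x1 x2 x3 x4"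
  shows "\<exists>y23 y13 y12 y. distinct [y23, y13, y12, y] \<and> reciprocal_figures x1 x2 x3 x4 y23 y13 y12 y"
proof -
  define p q r where "p = wedge (x1 - x4) (x2 - x4)" and "q = wedge (x2 - x4) (x3 - x4)"
    and "r = wedge (x3 - x4) (x1 - x4)"
  have "p \<noteq> 0" "q \<noteq> 0" "r \<noteq> 0" "p + q + r \<noteq> 0"
    using assms by (simp_all add: general_position_def p_def q_def r_def flip: wedge_triangle_sum)
  have dx: "distinct [x1, x2, x3, x4]"
    using assms by (rule general_position_imp_distinct)
  have closure: "of_real q * (x1 - x4) + of_real r * (x2 - x4) + of_real p * (x3 - x4) = 0"
    unfolding p_def q_def r_def by (rule wedge_vector_identity)
  \<comment> \<open>Maxwell's reciprocal figure; the three parallelisms not involving \<open>y\<close> follow from \<open>closure\<close>.\<close>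
  define y y12 y23 y13 where "y = (0 :: complex)" and "y12 = - of_real (q * r) * (x1 - x2)"
    and "y23 = - of_real (p * r) * (x2 - x3)" and "y13 = - of_real (p * q) * (x3 - x1)"
  have e1: "y - y12 = of_real (q * r) * (x1 - x2)"
   and e2: "y - y23 = of_real (p * r) * (x2 - x3)"
   and e3: "y - y13 = of_real (p * q) * (x3 - x1)"
    by (simp_all add: y_def y12_def y23_def y13_def)
  have e4: "y13 - y12 = of_real (q * (p + q + r)) * (x1 - x4)"
   and e5: "y12 - y23 = of_real (r * (p + q + r)) * (x2 - x4)"
   and e6: "y23 - y13 = of_real (p * (p + q + r)) * (x3 - x4)"
    using closure unfolding y12_def y23_def y13_def of_real_mult of_real_add by algebra+
  have "distinct [y23, y13, y12, y]"
    using e1 e2 e3 e4 e5 e6 dx \<open>p \<noteq> 0\<close> \<open>q \<noteq> 0\<close> \<open>r \<noteq> 0\<close> \<open>p + q + r \<noteq> 0\<close>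
    by (auto simp del: of_real_add)
  moreover have "reciprocal_figures x1 x2 x3 x4 y23 y13 y12 y"
    unfolding reciprocal_figures_def
    using e1 e2 e3 e4 e5 e6 by (blast intro: parallel_segI)
  ultimately show ?thesis
    by blast
qed

lemma general_position_with_cross_ratio:
  assumes "Im Q \<noteq> 0"
  shows "\<exists>x1 x2 x3 x4. general_position x1 x2 x3 x4 \<and> cross_ratio x1 x2 x3 x4 = Q"
proof -
  \<comment> \<open>Up to scaling, the image of \<open>(Q, 0, 1, \<infinity>)\<close>, whose cross-ratio is \<open>Q\<close>, under the
    inversion \<open>z \<mapsto> 1 / (z - (Q + 1) / 3)\<close> centred at the centroid of the triangle \<open>Q, 0, 1\<close>;
    the image of \<open>\<infinity>\<close> is the origin, which lies inside the image triangle.\<close>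
  define x1 x2 x3 where "x1 = (Q + 1) * (2 - Q)" and "x2 = - (2 * Q - 1) * (2 - Q)"
    and "x3 = (2 * Q - 1) * (Q + 1)"
  have "Q + 1 \<noteq> 0" "2 - Q \<noteq> 0" "2 * Q - 1 \<noteq> 0"
    using assms by (auto simp: complex_eq_iff)
  have w12: "wedge x1 x2 = - 3 * Im Q * (cmod (2 - Q))\<^sup>2"
    and w23: "wedge x2 x3 = - 3 * Im Q * (cmod (2 * Q - 1))\<^sup>2"
    and w31: "wedge x3 x1 = - 3 * Im Q * (cmod (Q + 1))\<^sup>2"
    unfolding cmod_power2 wedge_def x1_def x2_def x3_def by (simp_all add: power2_eq_square algebra_simps)
  have "wedge (x2 - x1) (x3 - x1)
      = - 3 * Im Q * ((cmod (2 - Q))\<^sup>2 + (cmod (2 * Q - 1))\<^sup>2 + (cmod (Q + 1))\<^sup>2)"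
    using wedge_triangle_sum[of x2 x1 x3 0] by (simp add: w12 w23 w31 algebra_simps)
  moreover have "(cmod (2 - Q))\<^sup>2 + (cmod (2 * Q - 1))\<^sup>2 + (cmod (Q + 1))\<^sup>2 > 0"
    using \<open>2 - Q \<noteq> 0\<close> by (simp add: add_pos_nonneg)
  ultimately have "general_position x1 x2 x3 0"
    using assms \<open>Q + 1 \<noteq> 0\<close> \<open>2 - Q \<noteq> 0\<close> \<open>2 * Q - 1 \<noteq> 0\<close>
    by (simp add: general_position_def w12 w23 w31)
  moreover have "cross_ratio x1 x2 x3 0 = Q"
  proof -
    have "(x2 - x3) * (0 - x1) = 3 * ((2 * Q - 1) * (Q + 1) * (2 - Q))"
      and "(x1 - x2) * (x3 - 0) = Q * (3 * ((2 * Q - 1) * (Q + 1) * (2 - Q)))"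
      unfolding x1_def x2_def x3_def by algebra+
    moreover have "3 * ((2 * Q - 1) * (Q + 1) * (2 - Q)) \<noteq> 0"
      using \<open>Q + 1 \<noteq> 0\<close> \<open>2 - Q \<noteq> 0\<close> \<open>2 * Q - 1 \<noteq> 0\<close> by simp
    ultimately show ?thesis
      by (simp add: cross_ratio_def)
  qed
  ultimately show ?thesis
    by blast
qed

lemma cross_ratio_eq_if_reciprocal_46:
  assumes "distinct [P1, P2, P3, P123]" and "distinct [F23, F13, F12, F]"
    and "Im (cross_ratio P1 P2 P3 P123) \<noteq> 0"
    and "reciprocal_46 P1 P2 P3 P123 F23 F13 F12 F"
  shows "cross_ratio P1 P2 P3 P123 = cross_ratio F23 F13 F12 F"
proof -
  obtain a b c d a' b' c' d' where nd: "moebius_nondeg a b c d" "moebius_nondeg a' b' c' d'"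
    and poles: "\<forall>z\<in>{P1, P2, P3, P123}. c * z + d \<noteq> 0" "\<forall>z\<in>{F23, F13, F12, F}. c' * z + d' \<noteq> 0"
    and rec: "reciprocal_figures (moebius a b c d P1) (moebius a b c d P2) (moebius a b c d P3)
      (moebius a b c d P123) (moebius a' b' c' d' F23) (moebius a' b' c' d' F13)
      (moebius a' b' c' d' F12) (moebius a' b' c' d' F)"
    using assms(4) unfolding reciprocal_46_iff by blast
  let ?M = "moebius a b c d" and ?N = "moebius a' b' c' d'"
  have crM: "cross_ratio (?M P1) (?M P2) (?M P3) (?M P123) = cross_ratio P1 P2 P3 P123"
    using nd(1) poles(1) by (rule cross_ratio_moebius)
  have crN: "cross_ratio (?N F23) (?N F13) (?N F12) (?N F) = cross_ratio F23 F13 F12 F"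
    using nd(2) poles(2) by (rule cross_ratio_moebius)
  have "cross_ratio (?M P1) (?M P2) (?M P3) (?M P123) = cross_ratio (?N F23) (?N F13) (?N F12) (?N F)"
  proof (rule reciprocal_figures_cross_ratio_eq[OF _ _ _ rec])
    show "distinct [?M P1, ?M P2, ?M P3, ?M P123]" "distinct [?N F23, ?N F13, ?N F12, ?N F]"
      using distinct_map_moebius[OF nd(1) _ assms(1)] distinct_map_moebius[OF nd(2) _ assms(2)] poles
      by simp_all
    show "Im (cross_ratio (?M P1) (?M P2) (?M P3) (?M P123)) \<noteq> 0"
      using crM assms(3) by simp
  qed
  with crM crN show ?thesis
    by simp
qed

lemma reciprocal_46_if_cross_ratio_eq:
  assumes "distinct [P1, P2, P3, P123]" and "distinct [F23, F13, F12, F]"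
    and "Im (cross_ratio P1 P2 P3 P123) \<noteq> 0"
    and eq: "cross_ratio P1 P2 P3 P123 = cross_ratio F23 F13 F12 F"
  shows "reciprocal_46 P1 P2 P3 P123 F23 F13 F12 F"
proof -
  obtain x1 x2 x3 x4 where gp: "general_position x1 x2 x3 x4"
    and crx: "cross_ratio x1 x2 x3 x4 = cross_ratio P1 P2 P3 P123"
    using general_position_with_cross_ratio[OF assms(3)] by blast
  obtain y23 y13 y12 y where dy: "distinct [y23, y13, y12, y]"
    and rec: "reciprocal_figures x1 x2 x3 x4 y23 y13 y12 y"
    using reciprocal_figure_exists[OF gp] by blast
  have dx: "distinct [x1, x2, x3, x4]"
    using gp by (rule general_position_imp_distinct)
  have "cross_ratio y23 y13 y12 y = cross_ratio F23 F13 F12 F"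
    using reciprocal_figures_cross_ratio_eq[OF dx dy _ rec] crx eq assms(3) by simp
  then show ?thesis
    unfolding reciprocal_46_iff
    using moebius_exists_if_cross_ratio_eq[OF assms(1) dx crx [symmetric]]
      moebius_exists_if_cross_ratio_eq[OF assms(2) dy]
    by (metis rec)
qed

theorem theorem2:
  fixes P1 P2 P3 P123 F23 F13 F12 F :: complex
  assumes "distinct [P1, P2, P3, P123]"
    and "distinct [F23, F13, F12, F]"
    and "Im (cross_ratio P1 P2 P3 P123) \<noteq> 0"
    and "Im (cross_ratio F23 F13 F12 F) \<noteq> 0"
  shows "reciprocal_46 P1 P2 P3 P123 F23 F13 F12 F \<longleftrightarrow>
         cross_ratio P1 P2 P3 P123 = cross_ratio F23 F13 F12 F"
  using assms(1-3) cross_ratio_eq_if_reciprocal_46 reciprocal_46_if_cross_ratio_eq by blast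

end
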